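(* Let $\alpha\in\mathbb{R}^n_{>0}$ be generic, let $S=\{1,\dots,|S|\}$ be $\alpha$-short with $|S|\ge2$, and let $i,j\notin S$ with $\alpha_i>\alpha_j$. Put $\alpha^\pm_{i,j}=(\alpha_1,\dots,\widehat{\alpha_i},\dots,\widehat{\alpha_j},\dots,\alpha_n,\alpha_i\pm\alpha_j)$. Then there exist diffeomorphisms $s_\pm:D^\pm_{i,j}(\alpha)\cap U_S(\alpha)\to U_S(\alpha^\pm_{i,j})$ given by $$s_\pm([p,q])=\Big[p_1,\dots,p_{|S|},0,\dots,0,\ q_1,\dots,\widehat{q_i},\dots,\widehat{q_j},\dots,q_n,\ \sqrt{\tfrac{\alpha_i\pm\alpha_j}{\alpha_i}}\,q_i\Big].$$
   Context: For $T\subset\{1,\dots,n\}$, $\varepsilon_T(\alpha)=\sum_{i\in T}\alpha_i-\sum_{i\notin T}\alpha_i$; $\alpha$ generic if all $\varepsilon_T(\alpha)\ne0$; $T$ is $\alpha$-short if $\varepsilon_T(\alpha)<0$. Hyperpolygon space: $(p,q)\in T^*\mathbb{C}^{2n}$, $p_i=(a_i,b_i)$ row and $q_i=(c_i,d_i)^t$ column vectors in $\mathbb{C}^2$; $K=(SU(2)\times U(1)^n)/\mathbb{Z}_2$ acts by $(p,q)\cdot[A;e]=((e_i^{-1}p_iA)_i,(A^{-1}q_ie_i)_i)$; $\mu_{\mathbb{R}}(p,q)=\frac{\mathbf{i}}{2}\sum_i(q_iq_i^*-p_i^*p_i)_0\oplus(\tfrac12(|q_i|^2-|p_i|^2))_i$,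 $\mu_{\mathbb{C}}(p,q)=-\sum_i(q_ip_i)_0\oplus(\mathbf{i}p_iq_i)_i$ ($(\cdot)_0$ trace-free part); $X(\alpha)=(\mu_{\mathbb{R}}^{-1}(0,\alpha)\cap\mu_{\mathbb{C}}^{-1}(0,0))/K$ (similarly $X(\alpha^\pm_{i,j})$ with $n-1$ entries). $U_S(\alpha)=\{[p,q]\in X(\alpha): q_k\text{ pairwise proportional for }k\in S,\ p_k=0\ \forall k\notin S\}$. Identifying $\mathbf{i}\,\mathfrak{su}(2)\cong\mathbb{R}^3$, $D^+_{i,j}(\alpha)$ (resp. $D^-_{i,j}(\alpha)$) is the set of $[p,q]$ for which $(q_iq_i^*-p_i^*p_i)_0$ and $(q_jq_j^*-p_j^*p_j)_0$ are parallel with positive (resp. negative) inner product. *)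

theory Defs
  imports "HOL-Analysis.Analysis"
begin

text \<open>A point (p,q) is encoded by two families indexed by nat; p k is the row vector
  p_k = (a_k,b_k) and q k the column vector q_k = (c_k,d_k)^t, both stored as complex^2.
  Only the indices 1..n are used; all other entries are required to be 0.\<close>

type_synonym hpt = "(nat \<Rightarrow> complex^2) \<times> (nat \<Rightarrow> complex^2)"

definition supp_ok :: "nat \<Rightarrow> hpt \<Rightarrow> bool" where
  "supp_ok n x \<longleftrightarrow> (\<forall>k. k \<notin> {1..n} \<longrightarrow> fst x k = 0 \<and> snd x k = 0)"

definition ctransp :: "complex^2^2 \<Rightarrow> complex^2^2" where
  "ctransp A = (\<chi> r s. cnj (A$s$r))"

definition SU2 :: "(complex^2^2) set" where
  "SU2 = {A. A ** ctransp A = mat 1 \<and> det A = 1}"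

definition outer :: "complex^2 \<Rightarrow> complex^2 \<Rightarrow> complex^2^2" where
  "outer u w = (\<chi> r s. u$r * w$s)"

definition cconj :: "complex^2 \<Rightarrow> complex^2" where
  "cconj v = (\<chi> r. cnj (v$r))"

definition mtrace :: "complex^2^2 \<Rightarrow> complex" where
  "mtrace M = M$1$1 + M$2$2"

definition mscale :: "complex \<Rightarrow> complex^2^2 \<Rightarrow> complex^2^2" where
  "mscale c M = (\<chi> r s. c * M$r$s)"

definition tracefree :: "complex^2^2 \<Rightarrow> complex^2^2" where
  "tracefree M = M - mscale (mtrace M / 2) (mat 1)"

definition rowcol :: "complex^2 \<Rightarrow> complex^2 \<Rightarrow> complex" where
  "rowcol p q = (\<Sum>r\<in>UNIV. p$r * q$r)"

definition muR :: "nat \<Rightarrow> hpt \<Rightarrow> (complex^2^2) \<times> (nat \<Rightarrow> real)" where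
  "muR n x = (mscale (\<i>/2) (\<Sum>k=1..n. tracefree (outer (snd x k) (cconj (snd x k))
                                              - outer (cconj (fst x k)) (fst x k))),
              (\<lambda>k. if k \<in> {1..n} then (norm (snd x k) ^ 2 - norm (fst x k) ^ 2) / 2 else 0))"

definition muC :: "nat \<Rightarrow> hpt \<Rightarrow> (complex^2^2) \<times> (nat \<Rightarrow> complex)" where
  "muC n x = (- (\<Sum>k=1..n. tracefree (outer (snd x k) (fst x k))),
              (\<lambda>k. if k \<in> {1..n} then \<i> * rowcol (fst x k) (snd x k) else 0))"

definition level :: "nat \<Rightarrow> (nat \<Rightarrow> real) \<Rightarrow> hpt set" where
  "level n \<alpha> = {x. supp_ok n x \<and> fst (muR n x) = 0 \<and> (\<forall>k\<in>{1..n}. snd (muR n x) k = \<alpha> k)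
                   \<and> muC n x = (0, (\<lambda>_. 0))}"

definition kact :: "hpt \<Rightarrow> complex^2^2 \<Rightarrow> (nat \<Rightarrow> complex) \<Rightarrow> hpt" where
  "kact x A e = ((\<lambda>k. inverse (e k) *s (fst x k v* A)),
                (\<lambda>k. e k *s (matrix_inv A *v snd x k)))"

text \<open>K-orbit relation on the level set (the Z_2 quotient does not change orbits)\<close>
definition orbrel :: "nat \<Rightarrow> (nat \<Rightarrow> real) \<Rightarrow> (hpt \<times> hpt) set" where
  "orbrel n \<alpha> = {(x, y). x \<in> level n \<alpha> \<and> y \<in> level n \<alpha> \<and>
       (\<exists>A\<in>SU2. \<exists>e. (\<forall>k. cmod (e k) = 1) \<and> y = kact x A e)}"

text \<open>X(alpha): its elements are the K-orbits [p,q] (as sets of points)\<close>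
definition Xsp :: "nat \<Rightarrow> (nat \<Rightarrow> real) \<Rightarrow> hpt set set" where
  "Xsp n \<alpha> = level n \<alpha> // orbrel n \<alpha>"

definition hclass :: "nat \<Rightarrow> (nat \<Rightarrow> real) \<Rightarrow> hpt \<Rightarrow> hpt set" where
  "hclass n \<alpha> x = orbrel n \<alpha> `` {x}"

definition epsT :: "nat \<Rightarrow> (nat \<Rightarrow> real) \<Rightarrow> nat set \<Rightarrow> real" where
  "epsT n \<alpha> T = (\<Sum>k\<in>T. \<alpha> k) - (\<Sum>k\<in>{1..n} - T. \<alpha> k)"

definition generic :: "nat \<Rightarrow> (nat \<Rightarrow> real) \<Rightarrow> bool" where
  "generic n \<alpha> \<longleftrightarrow> (\<forall>T. T \<subseteq> {1..n} \<longrightarrow> epsT n \<alpha> T \<noteq> 0)"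

definition short :: "nat \<Rightarrow> (nat \<Rightarrow> real) \<Rightarrow> nat set \<Rightarrow> bool" where
  "short n \<alpha> T \<longleftrightarrow> T \<subseteq> {1..n} \<and> epsT n \<alpha> T < 0"

definition cprop :: "complex^2 \<Rightarrow> complex^2 \<Rightarrow> bool" where
  "cprop u w \<longleftrightarrow> (\<exists>a b. (a, b) \<noteq> (0, 0) \<and> a *s u + b *s w = 0)"

definition U :: "nat \<Rightarrow> (nat \<Rightarrow> real) \<Rightarrow> nat set \<Rightarrow> hpt set set" where
  "U n \<alpha> S = {c \<in> Xsp n \<alpha>. \<forall>x\<in>c. (\<forall>k\<in>S. \<forall>l\<in>S. cprop (snd x k) (snd x l))
                                   \<and> (\<forall>k\<in>{1..n} - S. fst x k = 0)}"

definition Hk :: "hpt \<Rightarrow> nat \<Rightarrow> complex^2^2" where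
  "Hk x k = tracefree (outer (snd x k) (cconj (snd x k)) - outer (cconj (fst x k)) (fst x k))"

text \<open>Under i su(2) = R^3, the Euclidean inner product is a positive multiple of Re tr(XY),
  and parallel means linearly dependent over R.\<close>
definition minner :: "complex^2^2 \<Rightarrow> complex^2^2 \<Rightarrow> real" where
  "minner X Y = Re (mtrace (X ** Y))"

definition rparallel :: "complex^2^2 \<Rightarrow> complex^2^2 \<Rightarrow> bool" where
  "rparallel X Y \<longleftrightarrow> (\<exists>a b::real. (a, b) \<noteq> (0, 0) \<and> mscale (of_real a) X + mscale (of_real b) Y = 0)"

definition Dplus :: "nat \<Rightarrow> (nat \<Rightarrow> real) \<Rightarrow> nat \<Rightarrow> nat \<Rightarrow> hpt set set" where
  "Dplus n \<alpha> i j = {c \<in> Xsp n \<alpha>. \<forall>x\<in>c. rparallel (Hk x i) (Hk x j) \<and> minner (Hk x i) (Hk x j) > 0}"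

definition Dminus :: "nat \<Rightarrow> (nat \<Rightarrow> real) \<Rightarrow> nat \<Rightarrow> nat \<Rightarrow> hpt set set" where
  "Dminus n \<alpha> i j = {c \<in> Xsp n \<alpha>. \<forall>x\<in>c. rparallel (Hk x i) (Hk x j) \<and> minner (Hk x i) (Hk x j) < 0}"

text \<open>skip i j m = the m-th element (m = 1..n-2) of {1..n} - {i,j} in increasing order\<close>
definition skip :: "nat \<Rightarrow> nat \<Rightarrow> nat \<Rightarrow> nat" where
  "skip i j m = (if m < min i j then m else if m + 1 < max i j then m + 1 else m + 2)"

definition alpha_pm :: "nat \<Rightarrow> (nat \<Rightarrow> real) \<Rightarrow> nat \<Rightarrow> nat \<Rightarrow> real \<Rightarrow> (nat \<Rightarrow> real)" where
  "alpha_pm n \<alpha> i j sg = (\<lambda>m. if m \<in> {1..n-2} then \<alpha> (skip i j m)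
                              else if m = n - 1 then \<alpha> i + sg * \<alpha> j else 0)"

definition smap :: "nat \<Rightarrow> (nat \<Rightarrow> real) \<Rightarrow> nat \<Rightarrow> nat \<Rightarrow> real \<Rightarrow> nat set \<Rightarrow> hpt \<Rightarrow> hpt" where
  "smap n \<alpha> i j sg S x =
     ((\<lambda>m. if m \<in> {1..card S} then fst x m else 0),
      (\<lambda>m. if m \<in> {1..n-2} then snd x (skip i j m)
           else if m = n - 1 then complex_of_real (sqrt ((\<alpha> i + sg * \<alpha> j) / \<alpha> i)) *s snd x i
           else 0))"

definition padd :: "hpt \<Rightarrow> real \<Rightarrow> hpt \<Rightarrow> hpt" where
  "padd x t v = ((\<lambda>k. fst x k + t *\<^sub>R fst v k), (\<lambda>k. snd x k + t *\<^sub>R snd v k))"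

definition hcoords :: "(hpt \<Rightarrow> real) set" where
  "hcoords = {(\<lambda>x. Re (fst x k $ r)) | k r. True} \<union> {(\<lambda>x. Im (fst x k $ r)) | k r. True}
           \<union> {(\<lambda>x. Re (snd x k $ r)) | k r. True} \<union> {(\<lambda>x. Im (snd x k $ r)) | k r. True}"

text \<open>C^infinity on an open set W: all iterated directional derivatives exist and are continuous\<close>
definition smooth_real_on :: "hpt set \<Rightarrow> (hpt \<Rightarrow> real) \<Rightarrow> bool" where
  "smooth_real_on W h \<longleftrightarrow> (\<exists>F. h \<in> F \<and> (\<forall>g\<in>F. continuous_on W g \<and>
       (\<forall>v. \<exists>g'\<in>F. \<forall>x\<in>W. ((\<lambda>t. g (padd x t v)) has_real_derivative g' x) (at 0))))"

definition smooth_hmap_on :: "hpt set \<Rightarrow> (hpt \<Rightarrow> hpt) \<Rightarrow> bool" where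
  "smooth_hmap_on W F \<longleftrightarrow> open W \<and> (\<forall>c\<in>hcoords. smooth_real_on W (c \<circ> F))"

text \<open>f : A \<rightarrow> (orbits) is smooth if it has local smooth lifts to the ambient spaces\<close>
definition qsmooth :: "hpt set set \<Rightarrow> (hpt set \<Rightarrow> hpt set) \<Rightarrow> bool" where
  "qsmooth A f \<longleftrightarrow> (\<forall>x\<in>\<Union>A. \<exists>W F. x \<in> W \<and> smooth_hmap_on W F \<and>
                        (\<forall>c\<in>A. \<forall>y\<in>c \<inter> W. F y \<in> f c))"

definition qdiffeo :: "hpt set set \<Rightarrow> hpt set set \<Rightarrow> (hpt set \<Rightarrow> hpt set) \<Rightarrow> bool" where
  "qdiffeo A B f \<longleftrightarrow> bij_betw f A B \<and> qsmooth A f \<and> qsmooth B (inv_into A f)"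

end

theory Submission
  imports Defs
begin

text \<open>On \<open>U\<^sub>S(\<alpha>) \<inter> D\<^sup>\<pm>\<^sub>i\<^sub>,\<^sub>j(\<alpha>)\<close> the legs \<open>i\<close>, \<open>j\<close> have \<open>p\<^sub>i = p\<^sub>j = 0\<close>, so their
  moment images are \<open>(q\<^sub>i q\<^sub>i\<^sup>*)\<^sub>0\<close> and \<open>(q\<^sub>j q\<^sub>j\<^sup>*)\<^sub>0\<close>; being parallel, the norm equations
  \<open>|q\<^sub>k|\<^sup>2 = 2\<alpha>\<^sub>k\<close> force \<open>(q\<^sub>j q\<^sub>j\<^sup>*)\<^sub>0 = \<plusminus>(\<alpha>\<^sub>j/\<alpha>\<^sub>i) (q\<^sub>i q\<^sub>i\<^sup>*)\<^sub>0\<close>. Hence the single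
  vector \<open>\<surd>((\<alpha>\<^sub>i \<plusminus> \<alpha>\<^sub>j)/\<alpha>\<^sub>i) q\<^sub>i\<close> has the sum of the two as moment image, and replacing the
  two legs by it preserves both moment map equations. Conversely, a leg \<open>q\<close> of weight
  \<open>\<alpha>\<^sub>i \<plusminus> \<alpha>\<^sub>j\<close> splits as \<open>(\<surd>(\<alpha>\<^sub>i/(\<alpha>\<^sub>i \<plusminus> \<alpha>\<^sub>j)) q, \<surd>(\<alpha>\<^sub>j/(\<alpha>\<^sub>i \<plusminus> \<alpha>\<^sub>j)) q')\<close> with \<open>q' = q\<close>
  for \<open>+\<close> and \<open>q' = j q\<close> for \<open>-\<close>, quaternionic multiplication by \<open>j\<close> negating the moment
  image. Both maps are linear and equivariant, so they descend to mutually inverse smooth maps;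
  injectivity on orbits uses that \<open>(q q\<^sup>*)\<^sub>0\<close> determines \<open>q\<close> up to a phase.\<close>

lemmas mat2_simps = vec_eq_iff forall_2 matrix_matrix_mult_def matrix_vector_mult_def
  vector_matrix_mult_def sum_2 ctransp_def outer_def cconj_def mtrace_def mscale_def
  tracefree_def mat_def rowcol_def vector_scalar_mult_def

lemma matrix_inv_eq_right_inverse:
  fixes A :: "complex^2^2"
  assumes "A ** B = mat 1"
  shows "matrix_inv A = B"
proof -
  have "B ** A = mat 1" using assms matrix_left_right_inverse by blast
  then have "\<exists>A'. A ** A' = mat 1 \<and> A' ** A = mat 1" using assms by blast
  then have inv: "matrix_inv A ** A = mat 1"
    unfolding matrix_inv_def by (rule someI2_ex) blast
  have "matrix_inv A = matrix_inv A ** (A ** B)" using assms by simp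
  also have "\<dots> = B" using inv by (simp add: matrix_mul_assoc)
  finally show ?thesis .
qed

lemma SU2_matrix_inv: "A \<in> SU2 \<Longrightarrow> matrix_inv A = ctransp A"
  unfolding SU2_def by (auto intro: matrix_inv_eq_right_inverse)

lemma SU2_ctransp_mult: "A \<in> SU2 \<Longrightarrow> ctransp A ** A = mat 1"
  unfolding SU2_def using matrix_left_right_inverse by blast

lemma SU2_mult_ctransp: "A \<in> SU2 \<Longrightarrow> A ** ctransp A = mat 1"
  unfolding SU2_def by blast

lemma ctransp_mult: "ctransp (A ** B) = ctransp B ** ctransp (A::complex^2^2)"
  by (simp add: mat2_simps algebra_simps)

lemma ctransp_ctransp [simp]: "ctransp (ctransp A) = (A::complex^2^2)"
  by (simp add: mat2_simps)

lemma ctransp_mat1 [simp]: "ctransp (mat 1) = (mat 1::complex^2^2)"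
  by (simp add: mat2_simps)

lemma mat1_SU2: "mat 1 \<in> SU2"
  by (simp add: SU2_def det_I)

lemma det_ctransp: "det (ctransp A) = cnj (det (A::complex^2^2))"
  by (simp add: det_2 ctransp_def)

lemma ctransp_SU2: "A \<in> SU2 \<Longrightarrow> ctransp A \<in> SU2"
  by (simp add: SU2_def det_ctransp SU2_ctransp_mult)

lemma mult_SU2:
  assumes "A \<in> SU2" "B \<in> SU2"
  shows "A ** B \<in> SU2"
proof -
  have "(A ** B) ** ctransp (A ** B) = A ** (B ** ctransp B) ** ctransp A"
    by (simp add: ctransp_mult matrix_mul_assoc)
  also have "\<dots> = mat 1" using assms by (simp add: SU2_mult_ctransp)
  finally show ?thesis using assms by (simp add: SU2_def det_mul)
qed

lemma mscale_eq_0_iff: "mscale c M = 0 \<longleftrightarrow> c = 0 \<or> M = (0::complex^2^2)"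
  by (auto simp: mat2_simps)

lemma mscale_mscale: "mscale a (mscale b M) = mscale (a * b) M"
  by (simp add: mat2_simps)

lemma mscale_0 [simp]: "mscale 0 M = 0"
  by (simp add: mat2_simps)

lemma mscale_1 [simp]: "mscale 1 M = M"
  by (simp add: mat2_simps)

lemma mtrace_mult_commute: "mtrace (X ** Y) = mtrace (Y ** (X::complex^2^2))"
  by (simp add: mat2_simps algebra_simps)

lemma mult_diff_mult: "(V::complex^2^2) ** (M - N) ** (A::complex^2^2) = V ** M ** A - V ** N ** A"
  by (simp add: mat2_simps algebra_simps)

lemma mult_mscale_mult: "(V::complex^2^2) ** mscale c M ** (A::complex^2^2) = mscale c (V ** M ** A)"
  by (simp add: mat2_simps algebra_simps)

lemma mtrace_SU2_conj:
  assumes "A \<in> SU2"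
  shows "mtrace (ctransp A ** M ** A) = mtrace M"
proof -
  have "mtrace (ctransp A ** M ** A) = mtrace ((A ** ctransp A) ** M)"
    by (simp add: mtrace_mult_commute[of _ A] matrix_mul_assoc)
  then show ?thesis using assms by (simp add: SU2_mult_ctransp)
qed

lemma tracefree_SU2_conj:
  assumes "A \<in> SU2"
  shows "tracefree (ctransp A ** M ** A) = ctransp A ** tracefree M ** A"
  unfolding tracefree_def mult_diff_mult mult_mscale_mult mtrace_SU2_conj[OF assms]
  using assms by (simp add: SU2_ctransp_mult)

lemma minner_SU2_conj:
  assumes "A \<in> SU2"
  shows "minner (ctransp A ** X ** A) (ctransp A ** Y ** A) = minner X Y"
proof -
  have "(ctransp A ** X ** A) ** (ctransp A ** Y ** A) = ctransp A ** X ** (A ** ctransp A) ** Y ** A"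
    by (simp add: matrix_mul_assoc)
  also have "\<dots> = ctransp A ** (X ** Y) ** A"
    using assms by (simp add: SU2_mult_ctransp matrix_mul_assoc)
  finally show ?thesis
    unfolding minner_def by (simp add: mtrace_SU2_conj[OF assms])
qed

lemma minner_mscale_left: "minner (mscale (of_real t) X) Y = t * minner X Y"
  and minner_mscale_right: "minner X (mscale (of_real t) Y) = t * minner X Y"
proof -
  have "mtrace (mscale (of_real t) X ** Y) = of_real t * mtrace (X ** Y)"
    "mtrace (X ** mscale (of_real t) Y) = of_real t * mtrace (X ** Y)"
    by (simp_all add: mat2_simps algebra_simps)
  then show "minner (mscale (of_real t) X) Y = t * minner X Y"
    "minner X (mscale (of_real t) Y) = t * minner X Y"
    unfolding minner_def by simp_all
qed

lemma rparallel_mult: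
  assumes "rparallel X Y"
  shows "rparallel (V ** X ** A) (V ** Y ** (A::complex^2^2))"
proof -
  obtain a b :: real where ab: "(a, b) \<noteq> (0, 0)" "mscale (of_real a) X + mscale (of_real b) Y = 0"
    using assms unfolding rparallel_def by blast
  have "mscale (of_real a) (V ** X ** A) + mscale (of_real b) (V ** Y ** A)
      = V ** (mscale (of_real a) X + mscale (of_real b) Y) ** A"
    by (simp add: mat2_simps algebra_simps)
  also have "\<dots> = 0" using ab by (simp add: mat2_simps)
  finally show ?thesis unfolding rparallel_def using ab by blast
qed

lemma kact_mat1: "kact x (mat 1) (\<lambda>_. 1) = x"
  by (simp add: kact_def SU2_matrix_inv[OF mat1_SU2])

lemma kact_kact:
  assumes "A \<in> SU2" "B \<in> SU2"
  shows "kact (kact x A e) B f = kact x (A ** B) (\<lambda>k. e k * f k)"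
proof -
  have "matrix_inv (A ** B) = ctransp B ** ctransp A"
    using assms by (simp add: SU2_matrix_inv mult_SU2 ctransp_mult)
  then show ?thesis
    using assms unfolding kact_def
    by (simp add: SU2_matrix_inv scalar_vector_matrix_assoc vector_smult_assoc
        vector_matrix_mul_assoc vector_scalar_commute matrix_vector_mul_assoc mult.commute)
qed

lemma unimodular_nonzero: "\<forall>k. cmod (e k) = 1 \<Longrightarrow> e k \<noteq> 0"
  by (metis norm_zero zero_neq_one)

lemma kact_kact_inverse:
  assumes "A \<in> SU2" "\<forall>k. cmod (e k) = 1"
  shows "kact (kact x A e) (ctransp A) (\<lambda>k. inverse (e k)) = x"
  using assms unimodular_nonzero[OF assms(2)]
  by (simp add: kact_kact ctransp_SU2 SU2_mult_ctransp kact_mat1)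

lemma mem_orbrel_iff: "(x, y) \<in> orbrel n \<alpha> \<longleftrightarrow> x \<in> level n \<alpha> \<and> y \<in> level n \<alpha> \<and>
    (\<exists>A\<in>SU2. \<exists>e. (\<forall>k. cmod (e k) = 1) \<and> y = kact x A e)"
  by (simp add: orbrel_def)

lemma orbrel_equiv: "equiv (level n \<alpha>) (orbrel n \<alpha>)"
proof (rule equivI)
  show "orbrel n \<alpha> \<subseteq> level n \<alpha> \<times> level n \<alpha>"
    by (auto simp: orbrel_def)
  show "refl_on (level n \<alpha>) (orbrel n \<alpha>)"
  proof (rule refl_onI)
    fix x assume "x \<in> level n \<alpha>"
    moreover have "\<exists>A\<in>SU2. \<exists>e. (\<forall>k. cmod (e k) = 1) \<and> x = kact x A e"
      using mat1_SU2 by (intro bexI[of _ "mat 1"] exI[of _ "\<lambda>_. 1"]) (simp_all add: kact_mat1)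
    ultimately show "(x, x) \<in> orbrel n \<alpha>" by (simp only: mem_orbrel_iff simp_thms)
  qed
  show "sym (orbrel n \<alpha>)"
  proof (rule symI)
    fix x y assume "(x, y) \<in> orbrel n \<alpha>"
    then have lv: "x \<in> level n \<alpha>" "y \<in> level n \<alpha>"
      and "\<exists>A\<in>SU2. \<exists>e. (\<forall>k. cmod (e k) = 1) \<and> y = kact x A e"
      by (simp_all only: mem_orbrel_iff)
    then obtain A e where A: "A \<in> SU2" "\<forall>k. cmod (e k) = 1" "y = kact x A e" by blast
    have "x = kact y (ctransp A) (\<lambda>k. inverse (e k))" using kact_kact_inverse A by simp
    moreover have "\<forall>k. cmod (inverse (e k)) = 1" using A(2) by (simp add: norm_inverse)
    ultimately show "(y, x) \<in> orbrel n \<alpha>"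
      unfolding mem_orbrel_iff using lv ctransp_SU2[OF A(1)]
      by (intro conjI bexI[of _ "ctransp A"] exI[of _ "\<lambda>k. inverse (e k)"]) simp_all
  qed
  show "trans (orbrel n \<alpha>)"
  proof (rule transI)
    fix x y z assume xy: "(x, y) \<in> orbrel n \<alpha>" and yz: "(y, z) \<in> orbrel n \<alpha>"
    from xy have "x \<in> level n \<alpha>" and "\<exists>A\<in>SU2. \<exists>e. (\<forall>k. cmod (e k) = 1) \<and> y = kact x A e"
      by (simp_all only: mem_orbrel_iff)
    moreover from yz have "z \<in> level n \<alpha>" and "\<exists>B\<in>SU2. \<exists>f. (\<forall>k. cmod (f k) = 1) \<and> z = kact y B f"
      by (simp_all only: mem_orbrel_iff)
    ultimately obtain A e B f where lv: "x \<in> level n \<alpha>" "z \<in> level n \<alpha>"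
      and AB: "A \<in> SU2" "\<forall>k. cmod (e k) = 1" "y = kact x A e"
        "B \<in> SU2" "\<forall>k. cmod (f k) = 1" "z = kact y B f"
      by blast
    have "z = kact x (A ** B) (\<lambda>k. e k * f k)" using AB kact_kact by simp
    moreover have "\<forall>k. cmod (e k * f k) = 1" using AB by (simp add: norm_mult)
    ultimately show "(x, z) \<in> orbrel n \<alpha>"
      unfolding mem_orbrel_iff using lv mult_SU2[OF AB(1,4)]
      by (intro conjI bexI[of _ "A ** B"] exI[of _ "\<lambda>k. e k * f k"]) simp_all
  qed
qed

lemma Xsp_elem:
  assumes "c \<in> Xsp n \<alpha>" "x \<in> c"
  shows "c = hclass n \<alpha> x" "x \<in> level n \<alpha>"
proof -
  obtain y where y: "y \<in> level n \<alpha>" "c = orbrel n \<alpha> `` {y}"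
    using assms(1) unfolding Xsp_def by (auto elim!: quotientE)
  have yx: "(y, x) \<in> orbrel n \<alpha>" using assms(2) y by simp
  show "c = hclass n \<alpha> x" unfolding hclass_def y(2)
    by (rule equiv_class_eq[OF orbrel_equiv yx])
  show "x \<in> level n \<alpha>" using yx unfolding mem_orbrel_iff by simp
qed

lemma Xsp_elem_nonempty: "c \<in> Xsp n \<alpha> \<Longrightarrow> \<exists>x. x \<in> c"
  unfolding Xsp_def by (metis equiv_class_self orbrel_equiv quotientE)

lemma hclass_self: "x \<in> level n \<alpha> \<Longrightarrow> x \<in> hclass n \<alpha> x"
  unfolding hclass_def using orbrel_equiv equiv_class_self by metis

lemma hclass_in_Xsp: "x \<in> level n \<alpha> \<Longrightarrow> hclass n \<alpha> x \<in> Xsp n \<alpha>"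
  unfolding hclass_def Xsp_def by (rule quotientI)

lemma mem_hclassD: "y \<in> hclass n \<alpha> x \<Longrightarrow>
    y \<in> level n \<alpha> \<and> x \<in> level n \<alpha> \<and> (\<exists>A\<in>SU2. \<exists>e. (\<forall>k. cmod (e k) = 1) \<and> y = kact x A e)"
  unfolding hclass_def orbrel_def by blast

lemma hclass_eqI:
  assumes "x \<in> level n \<alpha>" "y \<in> level n \<alpha>" "A \<in> SU2" "\<forall>k. cmod (e k) = 1" "y = kact x A e"
  shows "hclass n \<alpha> x = hclass n \<alpha> y"
proof -
  have "(x, y) \<in> orbrel n \<alpha>" unfolding mem_orbrel_iff using assms by metis
  then show ?thesis unfolding hclass_def by (rule equiv_class_eq[OF orbrel_equiv])
qed

section \<open>The moment image of a single vector\<close>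

definition vmoment :: "complex^2 \<Rightarrow> complex^2^2" where
  "vmoment q = tracefree (outer q (cconj q))"

text \<open>Left multiplication by the quaternion \<open>j\<close> under \<open>\<complex>\<^sup>2 \<cong> \<bbbH>\<close>.\<close>

definition quat_j :: "complex^2 \<Rightarrow> complex^2" where
  "quat_j q = (\<chi> r. if r = 1 then - cnj (q$2) else cnj (q$1))"

lemma Hk_eq_vmoment: "fst x k = 0 \<Longrightarrow> Hk x k = vmoment (snd x k)"
  by (simp add: Hk_def vmoment_def mat2_simps)

lemma vmoment_scale: "vmoment (of_real r *s q) = mscale (of_real (r^2)) (vmoment q)"
  by (simp add: vmoment_def mat2_simps algebra_simps power2_eq_square)

lemma vmoment_quat_j: "vmoment (quat_j q) = mscale (-1) (vmoment q)"
  by (simp add: vmoment_def quat_j_def mat2_simps algebra_simps) (simp add: field_simps)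

lemma norm_vec2_sq: "(norm (q::complex^2))^2 = (cmod (q$1))^2 + (cmod (q$2))^2"
  by (simp add: norm_vec_def L2_set_def sum_2 sum_nonneg)

lemma norm_quat_j [simp]: "norm (quat_j q) = norm q"
proof -
  have "(norm (quat_j q))^2 = (norm q)^2" by (simp add: norm_vec2_sq quat_j_def)
  then show ?thesis by (simp add: power2_eq_iff_nonneg)
qed

lemma of_real_smult_eq_scaleR: "of_real r *s (q::complex^2) = r *\<^sub>R q"
  unfolding vec_eq_iff vector_scalar_mult_def scaleR_vec_def by (simp add: scaleR_conv_of_real)

lemma minner_vmoment_self: "minner (vmoment q) (vmoment q) = (norm q)^4 / 2"
proof -
  obtain a1 a2 b1 b2 where q: "q$1 = Complex a1 a2" "q$2 = Complex b1 b2"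
    by (metis complex.exhaust)
  have "(norm q)^2 = a1^2 + a2^2 + b1^2 + b2^2"
    by (simp add: norm_vec2_sq q cmod_power2)
  then have "(norm q)^4 = (a1^2 + a2^2 + b1^2 + b2^2)^2"
    by (metis numeral_Bit0 power_add power2_eq_square)
  then show ?thesis
    by (simp add: vmoment_def minner_def mat2_simps q power2_eq_square)
      (simp add: field_simps power2_eq_square)
qed

lemma vmoment_eq_0_iff: "vmoment q = 0 \<longleftrightarrow> q = 0"
proof
  assume "vmoment q = 0"
  then have "minner (vmoment q) (vmoment q) = 0" by (simp add: minner_def mtrace_def)
  then show "q = 0" using minner_vmoment_self[of q] by simp
qed (simp add: vmoment_def mat2_simps)

lemma rparallel_vmoment_ratio:
  assumes "rparallel (vmoment u) (vmoment w)" "u \<noteq> 0"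
  obtains t where "vmoment w = mscale (of_real t) (vmoment u)"
proof -
  obtain a b :: real where ab: "(a, b) \<noteq> (0, 0)"
    and lin: "mscale (of_real a) (vmoment u) + mscale (of_real b) (vmoment w) = 0"
    using assms(1) unfolding rparallel_def by blast
  have "b \<noteq> 0"
    using ab lin assms(2) by (auto simp: mscale_eq_0_iff vmoment_eq_0_iff)
  then have "vmoment w = mscale (of_real (- a / b)) (vmoment u)"
    using lin by (simp add: mat2_simps field_simps) (metis add.commute add_eq_0_iff mult.commute)
  then show ?thesis by (rule that)
qed

lemma vmoment_ratio_norm:
  assumes "vmoment w = mscale (of_real t) (vmoment u)"
  shows "(norm w)^2 = \<bar>t\<bar> * (norm u)^2"
proof -
  have "minner (vmoment w) (vmoment w) = t^2 * minner (vmoment u) (vmoment u)"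
    unfolding assms minner_mscale_left minner_mscale_right by (simp add: power2_eq_square)
  then have "((norm w)^2)^2 = (\<bar>t\<bar> * (norm u)^2)^2"
    by (simp add: minner_vmoment_self power_mult_distrib flip: power_mult)
  then show ?thesis by (rule power2_eq_imp_eq) simp_all
qed

lemma vmoment_entries:
  "2 * vmoment q $ 1 $ 1 = q$1 * cnj (q$1) - q$2 * cnj (q$2)"
  "vmoment q $ 1 $ 2 = q$1 * cnj (q$2)"
  by (simp_all add: vmoment_def mat2_simps algebra_simps)

lemma vmoment_eq_imp_cmod_eq:
  assumes "vmoment u = vmoment w"
  shows "cmod (u$1) = cmod (w$1)" "cmod (u$2) = cmod (w$2)"
proof -
  have "(norm u)^4 = (norm w)^4"
    using arg_cong[OF assms, of "\<lambda>M. minner M M"] by (simp add: minner_vmoment_self)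
  then have "norm u = norm w" by (simp add: power_eq_iff_eq_base)
  then have "(cmod (u$1))^2 + (cmod (u$2))^2 = (cmod (w$1))^2 + (cmod (w$2))^2"
    by (metis norm_vec2_sq)
  moreover have "of_real ((cmod (u$1))^2 - (cmod (u$2))^2)
      = (of_real ((cmod (w$1))^2 - (cmod (w$2))^2) :: complex)"
    using arg_cong[OF assms, of "\<lambda>M. 2 * M $ 1 $ 1"]
    unfolding vmoment_entries by (simp only: of_real_diff complex_norm_square)
  then have "(cmod (u$1))^2 - (cmod (u$2))^2 = (cmod (w$1))^2 - (cmod (w$2))^2"
    by (rule of_real_eq_iff[THEN iffD1])
  ultimately have "(cmod (u$1))^2 = (cmod (w$1))^2" "(cmod (u$2))^2 = (cmod (w$2))^2"
    by linarith+
  then show "cmod (u$1) = cmod (w$1)" "cmod (u$2) = cmod (w$2)"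
    by (simp_all add: power2_eq_iff_nonneg)
qed

text \<open>The fibres of \<open>vmoment\<close> are the circles of the Hopf fibration.\<close>

lemma vmoment_eq_imp_phase:
  assumes "vmoment u = vmoment w"
  obtains c where "cmod c = 1" "u = c *s w"
proof -
  define u1 u2 w1 w2 where "u1 = u$1" "u2 = u$2" "w1 = w$1" "w2 = w$2"
  have c1: "cmod u1 = cmod w1" and c2: "cmod u2 = cmod w2"
    using vmoment_eq_imp_cmod_eq[OF assms] unfolding u1_u2_w1_w2_def by auto
  have off: "u1 * cnj u2 = w1 * cnj w2"
    using arg_cong[OF assms, of "\<lambda>M. M $ 1 $ 2"] unfolding vmoment_entries u1_u2_w1_w2_def .
  show ?thesis
  proof (cases "w1 = 0")
    case False
    define c where "c = u1 / w1"
    have u1: "u1 \<noteq> 0" using c1 False by auto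
    have "cmod c = 1" unfolding c_def using c1 False by (simp add: norm_divide)
    moreover have "u1 = c * w1" unfolding c_def using False by simp
    moreover have "u2 = c * w2"
    proof -
      have "cnj u1 * u1 = cnj w1 * w1"
        using c1 complex_norm_square[of u1] complex_norm_square[of w1] by (simp add: mult.commute)
      then have "cnj u1 * (c * w2) = cnj w1 * w2"
        unfolding c_def using False by (simp add: field_simps)
      moreover have "cnj u1 * u2 = cnj w1 * w2"
        using arg_cong[OF off, of cnj] by (simp add: mult.commute)
      ultimately have "cnj u1 * u2 = cnj u1 * (c * w2)" by (simp only:)
      then show ?thesis using u1 by simp
    qed
    ultimately show ?thesis
      using that unfolding u1_u2_w1_w2_def by (simp add: vec_eq_iff forall_2)
  next
    case True
    then have "u1 = 0" using c1 by simp
    define c where "c = (if w2 = 0 then 1 else u2 / w2)"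
    have "cmod c = 1" "u2 = c * w2"
      unfolding c_def using c2 by (auto simp: norm_divide)
    then show ?thesis
      using that \<open>u1 = 0\<close> True unfolding u1_u2_w1_w2_def by (simp add: vec_eq_iff forall_2)
  qed
qed

lemma outer_ctransp_mult:
  "outer (ctransp A *v u) (cconj (ctransp A *v w)) = ctransp A ** outer u (cconj w) ** A"
  by (simp add: mat2_simps algebra_simps)

lemma outer_vector_matrix_mult:
  "outer (cconj (p v* A)) (p v* A) = ctransp A ** outer (cconj p) p ** A"
  by (simp add: mat2_simps algebra_simps)

lemma outer_smult:
  "outer (c *s v) (cconj (c *s w)) = mscale (c * cnj c) (outer v (cconj w))"
  "outer (cconj (c *s v)) (c *s w) = mscale (cnj c * c) (outer (cconj v) w)"
  by (simp_all add: mat2_simps algebra_simps)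

lemma unimodular_mult_cnj: "cmod c = 1 \<Longrightarrow> c * cnj c = 1"
  using complex_norm_square[of c] by simp

lemma vmoment_SU2_conj:
  assumes "A \<in> SU2" "cmod c = 1"
  shows "vmoment (c *s (ctransp A *v q)) = ctransp A ** vmoment q ** A"
  unfolding vmoment_def outer_smult outer_ctransp_mult
  using assms by (simp add: unimodular_mult_cnj tracefree_SU2_conj)

lemma Hk_kact:
  assumes "A \<in> SU2" "\<forall>k. cmod (e k) = 1"
  shows "Hk (kact x A e) k = ctransp A ** Hk x k ** A"
proof -
  have "e k * cnj (e k) = 1" "inverse (cnj (e k)) * inverse (e k) = 1"
    using unimodular_mult_cnj assms(2)
    by (simp_all add: inverse_mult_distrib[symmetric] mult.commute)
  then show ?thesis
    unfolding Hk_def kact_def SU2_matrix_inv[OF assms(1)]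
    by (simp add: outer_smult outer_ctransp_mult outer_vector_matrix_mult
        mult_diff_mult[symmetric] tracefree_SU2_conj[OF assms(1)])
qed

definition unskip :: "nat \<Rightarrow> nat \<Rightarrow> nat \<Rightarrow> nat" where
  "unskip i j k = (if k < min i j then k else if k < max i j then k - 1 else k - 2)"

lemma skip_less_min: "m < min i j \<Longrightarrow> skip i j m = m"
  unfolding skip_def by auto

lemma unskip_less_min: "k < min i j \<Longrightarrow> unskip i j k = k"
  unfolding unskip_def by auto

lemma le_skip: "m \<le> skip i j m"
  unfolding skip_def by auto

lemma skip_in_range:
  "i \<noteq> j \<Longrightarrow> i \<in> {1..n} \<Longrightarrow> j \<in> {1..n} \<Longrightarrow> m \<in> {1..n-2} \<Longrightarrow>
    skip i j m \<in> {1..n} \<and> skip i j m \<noteq> i \<and> skip i j m \<noteq> j"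
  unfolding skip_def min_def max_def by auto

lemma unskip_in_range:
  "i \<noteq> j \<Longrightarrow> i \<in> {1..n} \<Longrightarrow> j \<in> {1..n} \<Longrightarrow> k \<in> {1..n} \<Longrightarrow> k \<noteq> i \<Longrightarrow> k \<noteq> j \<Longrightarrow>
    unskip i j k \<in> {1..n-2}"
  unfolding unskip_def min_def max_def by auto

lemma unskip_skip: "i \<noteq> j \<Longrightarrow> 1 \<le> i \<Longrightarrow> 1 \<le> j \<Longrightarrow> unskip i j (skip i j m) = m"
  unfolding skip_def unskip_def min_def max_def by auto

lemma skip_unskip: "i \<noteq> j \<Longrightarrow> k \<noteq> i \<Longrightarrow> k \<noteq> j \<Longrightarrow> skip i j (unskip i j k) = k"
  unfolding skip_def unskip_def min_def max_def by auto

lemma bij_betw_skip: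
  assumes "i \<noteq> j" "i \<in> {1..n}" "j \<in> {1..n}"
  shows "bij_betw (skip i j) {1..n-2} ({1..n} - {i, j})"
proof (rule bij_betw_byWitness[where f' = "unskip i j"])
  show "\<forall>m\<in>{1..n-2}. unskip i j (skip i j m) = m" using assms unskip_skip by auto
  show "\<forall>k\<in>{1..n} - {i, j}. skip i j (unskip i j k) = k" using assms skip_unskip by auto
  show "skip i j ` {1..n-2} \<subseteq> {1..n} - {i, j}" using skip_in_range[OF assms] by auto
  show "unskip i j ` ({1..n} - {i, j}) \<subseteq> {1..n-2}" using unskip_in_range[OF assms] by blast
qed

lemma atLeastAtMost_split_skip:
  assumes "i \<noteq> j" "i \<in> {1..n}" "j \<in> {1..n}"
  shows "{1..n} = insert i (insert j (skip i j ` {1..n-2}))"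
  using bij_betw_imp_surj_on[OF bij_betw_skip[OF assms]] assms by auto

lemma sum_split_skip:
  assumes "i \<noteq> j" "i \<in> {1..n}" "j \<in> {1..n}"
  shows "(\<Sum>k=1..n. g k) = (\<Sum>m=1..n-2. g (skip i j m)) + g i + (g j :: 'a::comm_monoid_add)"
proof -
  have "{1..n} = insert i (insert j ({1..n} - {i, j}))" using assms by auto
  then have "(\<Sum>k=1..n. g k) = g i + (g j + (\<Sum>k\<in>{1..n} - {i, j}. g k))"
    using assms by (metis Diff_iff finite_Diff finite_atLeastAtMost finite_insert insertCI insertE sum.insert)
  also have "(\<Sum>k\<in>{1..n} - {i, j}. g k) = (\<Sum>m=1..n-2. g (skip i j m))"
    using sum.reindex_bij_betw[OF bij_betw_skip[OF assms], of g] by simp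
  finally show ?thesis by (simp add: ac_simps)
qed

lemma atLeastAtMost_pred_eq: "2 \<le> n \<Longrightarrow> {1..n-1} = insert (n-1) {1..n-2::nat}"
  by auto

lemma sum_atLeastAtMost_pred:
  assumes "2 \<le> (n::nat)"
  shows "(\<Sum>m=1..n-1. g m) = (\<Sum>m=1..n-2. g m) + (g (n-1) :: 'a::comm_monoid_add)"
  unfolding atLeastAtMost_pred_eq[OF assms] using assms by (subst sum.insert) (auto simp: add.commute)

lemma level_iff: "x \<in> level n \<alpha> \<longleftrightarrow> supp_ok n x \<and> (\<Sum>k=1..n. Hk x k) = 0 \<and>
    (\<forall>k\<in>{1..n}. (norm (snd x k)^2 - norm (fst x k)^2) / 2 = \<alpha> k) \<and>
    (\<Sum>k=1..n. tracefree (outer (snd x k) (fst x k))) = 0 \<and>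
    (\<forall>k\<in>{1..n}. rowcol (fst x k) (snd x k) = 0)"
  unfolding level_def muR_def muC_def Hk_def[symmetric]
  by (auto simp: mscale_eq_0_iff fun_eq_iff)

lemma level_norm_snd:
  assumes "x \<in> level n \<alpha>" "k \<in> {1..n}" "fst x k = 0"
  shows "(norm (snd x k))^2 = 2 * \<alpha> k"
  using assms unfolding level_iff by force

definition Ucond :: "nat \<Rightarrow> nat set \<Rightarrow> hpt \<Rightarrow> bool" where
  "Ucond n S x \<longleftrightarrow> (\<forall>k\<in>S. \<forall>l\<in>S. cprop (snd x k) (snd x l)) \<and> (\<forall>k\<in>{1..n} - S. fst x k = 0)"

definition Dcond :: "nat \<Rightarrow> nat \<Rightarrow> real \<Rightarrow> hpt \<Rightarrow> bool" where
  "Dcond i j sg x \<longleftrightarrow> rparallel (Hk x i) (Hk x j) \<and> sg * minner (Hk x i) (Hk x j) > 0"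

definition Dsg :: "nat \<Rightarrow> (nat \<Rightarrow> real) \<Rightarrow> nat \<Rightarrow> nat \<Rightarrow> real \<Rightarrow> hpt set set" where
  "Dsg n \<alpha> i j sg = {c \<in> Xsp n \<alpha>. \<forall>x\<in>c. Dcond i j sg x}"

lemma U_eq: "U n \<alpha> S = {c \<in> Xsp n \<alpha>. \<forall>x\<in>c. Ucond n S x}"
  unfolding U_def Ucond_def ..

lemma Dplus_eq: "Dplus n \<alpha> i j = Dsg n \<alpha> i j 1"
  unfolding Dplus_def Dsg_def Dcond_def by simp

lemma Dminus_eq: "Dminus n \<alpha> i j = Dsg n \<alpha> i j (-1)"
  unfolding Dminus_def Dsg_def Dcond_def by simp

lemma cprop_smult_mult:
  assumes "cprop u w" "e \<noteq> 0" "f \<noteq> 0"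
  shows "cprop (e *s (B *v u)) (f *s (B *v w))"
proof -
  obtain a b where ab: "(a, b) \<noteq> (0, 0)" "a *s u + b *s w = 0"
    using assms unfolding cprop_def by blast
  have "(a / e) *s (e *s (B *v u)) + (b / f) *s (f *s (B *v w)) = B *v (a *s u + b *s w)"
    using assms(2,3) by (simp add: vector_smult_assoc vector_scalar_commute matrix_vector_right_distrib)
  also have "\<dots> = 0" using ab by simp
  finally show ?thesis
    unfolding cprop_def using ab assms(2,3) by (intro exI[of _ "a/e"] exI[of _ "b/f"]) auto
qed

lemma Ucond_kact:
  assumes "Ucond n S x" "\<forall>k. cmod (e k) = 1"
  shows "Ucond n S (kact x A e)"
  using assms cprop_smult_mult unimodular_nonzero[OF assms(2)]
  unfolding Ucond_def kact_def by simp

lemma Dcond_kact: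
  assumes "Dcond i j sg x" "A \<in> SU2" "\<forall>k. cmod (e k) = 1"
  shows "Dcond i j sg (kact x A e)"
  using assms unfolding Dcond_def Hk_kact[OF assms(2,3)] minner_SU2_conj[OF assms(2)]
  by (simp add: rparallel_mult)

lemma hclass_in_U:
  assumes "x \<in> level n \<alpha>" "Ucond n S x"
  shows "hclass n \<alpha> x \<in> U n \<alpha> S"
  unfolding U_eq using assms hclass_in_Xsp mem_hclassD Ucond_kact by blast

lemma hclass_in_Dsg:
  assumes "x \<in> level n \<alpha>" "Dcond i j sg x"
  shows "hclass n \<alpha> x \<in> Dsg n \<alpha> i j sg"
  unfolding Dsg_def using assms hclass_in_Xsp mem_hclassD Dcond_kact by blast

lemma continuous_on_if_const:
  "(P \<Longrightarrow> continuous_on S f) \<Longrightarrow> (\<not> P \<Longrightarrow> continuous_on S g) \<Longrightarrow>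
    continuous_on S (\<lambda>x. if P then f x else g x)"
  by (cases P) auto

lemma continuous_on_fst_at: "continuous_on S (\<lambda>x::hpt. fst x k)"
  by (rule continuous_on_product_then_coordinatewise[OF continuous_on_fst[OF continuous_on_id]])

lemma continuous_on_snd_at: "continuous_on S (\<lambda>x::hpt. snd x k)"
  by (rule continuous_on_product_then_coordinatewise[OF continuous_on_snd[OF continuous_on_id]])

lemma continuous_on_smult: "continuous_on S f \<Longrightarrow> continuous_on S (\<lambda>x. c *s (f x :: complex^2))"
  unfolding vector_scalar_mult_def
  by (intro continuous_on_vec_lambda continuous_on_mult continuous_on_const continuous_on_component)

lemma continuous_on_quat_j: "continuous_on S f \<Longrightarrow> continuous_on S (\<lambda>x. quat_j (f x))"
  unfolding quat_j_def
  by (intro continuous_on_vec_lambda continuous_on_if_const continuous_on_minus continuous_on_cnj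
      continuous_on_component)

lemma smult_add_scaleR: "c *s (a + t *\<^sub>R b) = c *s a + t *\<^sub>R (c *s (b::complex^2))"
  by (simp add: vec_eq_iff vector_scalar_mult_def scaleR_vec_def algebra_simps)

lemma smult_scaleR: "c *s (t *\<^sub>R b) = t *\<^sub>R (c *s (b::complex^2))"
  by (simp add: vec_eq_iff vector_scalar_mult_def scaleR_vec_def)

lemma quat_j_add_scaleR: "quat_j (a + t *\<^sub>R b) = quat_j a + t *\<^sub>R quat_j b"
  by (simp add: vec_eq_iff quat_j_def scaleR_vec_def forall_2 complex_eq_iff)

text \<open>A continuous map commuting with \<open>padd\<close> is real linear, so every coordinate of it has a
  constant directional derivative.\<close>

lemma smooth_hmap_on_linear:
  assumes cont: "continuous_on UNIV F" and lin: "\<And>x t v. F (padd x t v) = padd (F x) t (F v)"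
  shows "smooth_hmap_on UNIV F"
  unfolding smooth_hmap_on_def
proof (intro conjI ballI)
  show "open (UNIV :: hpt set)" by simp
  fix c assume c: "c \<in> hcoords"
  let ?h = "c \<circ> F"
  let ?G = "insert ?h (range (\<lambda>r. \<lambda>_. r))"
  have "c (padd y t w) = c y + t * c w" for y t w
    using c unfolding hcoords_def padd_def by auto
  then have h_lin: "?h (padd x t v) = ?h x + t * ?h v" for x t v by (simp add: lin)
  have "continuous_on UNIV c"
    using c unfolding hcoords_def
    by (auto intro!: continuous_on_Re continuous_on_Im continuous_on_component
        continuous_on_fst_at continuous_on_snd_at)
  then have h_cont: "continuous_on UNIV ?h"
    by (rule continuous_on_compose[OF cont continuous_on_subset]) simp
  show "smooth_real_on UNIV ?h"
    unfolding smooth_real_on_def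
  proof (intro exI[of _ ?G] conjI ballI allI)
    fix g v assume g: "g \<in> ?G"
    show "continuous_on UNIV g" using g h_cont by auto
    show "\<exists>g'\<in>?G. \<forall>x\<in>UNIV. ((\<lambda>t. g (padd x t v)) has_real_derivative g' x) (at 0)"
    proof (cases "g = ?h")
      case True
      have "((\<lambda>t. ?h x + t * ?h v) has_real_derivative ?h v) (at 0)" for x
        by (auto intro!: derivative_eq_intros)
      then show ?thesis using True h_lin by (intro bexI[of _ "\<lambda>_. ?h v"]) auto
    next
      case False
      then obtain r where "g = (\<lambda>_. r)" using g by auto
      then show ?thesis by (intro bexI[of _ "\<lambda>_. 0"]) auto
    qed
  qed simp
qed

section \<open>Merging two legs\<close>

definition sign_flip :: "real \<Rightarrow> complex^2 \<Rightarrow> complex^2" where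
  "sign_flip sg v = (if sg = 1 then v else quat_j v)"

lemma vmoment_sign_flip:
  "sg = 1 \<or> sg = -1 \<Longrightarrow> vmoment (sign_flip sg v) = mscale (of_real sg) (vmoment v)"
  by (auto simp: sign_flip_def vmoment_quat_j)

lemma norm_sign_flip [simp]: "norm (sign_flip sg v) = norm v"
  by (simp add: sign_flip_def)

locale leg_merging =
  fixes n :: nat and \<alpha> :: "nat \<Rightarrow> real" and S :: "nat set" and i j :: nat and sg :: real
  assumes pos: "\<forall>k\<in>{1..n}. \<alpha> k > 0"
    and S_eq: "S = {1..card S}"
    and ij: "i \<in> {1..n}" "j \<in> {1..n}" "i \<notin> S" "j \<notin> S"
    and alpha_i_gt: "\<alpha> i > \<alpha> j"
    and sg: "sg = 1 \<or> sg = -1"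
begin

lemma i_ne_j: "i \<noteq> j"
  using alpha_i_gt by auto

lemma card_S_less: "card S < i" "card S < j"
  using ij S_eq by (metis atLeastAtMost_iff not_less)+

lemma n_ge: "card S + 2 \<le> n" "2 \<le> n"
  using card_S_less ij i_ne_j by auto

lemma mem_S_iff: "k \<in> S \<longleftrightarrow> k \<in> {1..card S}"
  by (rule arg_cong[OF S_eq])

lemma alpha_ij_pos: "\<alpha> i > 0" "\<alpha> j > 0"
  using pos ij by auto

lemma merged_weight_pos: "\<alpha> i + sg * \<alpha> j > 0"
  using sg alpha_i_gt alpha_ij_pos by auto

lemma skip_in_legs: "m \<in> {1..n-2} \<Longrightarrow> skip i j m \<in> {1..n} \<and> skip i j m \<noteq> i \<and> skip i j m \<noteq> j"
  using skip_in_range[OF i_ne_j ij(1,2)] by auto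

lemma skip_S: "m \<in> S \<Longrightarrow> skip i j m = m"
  using card_S_less by (intro skip_less_min) (simp add: mem_S_iff)

lemma skip_notin_S: "m \<in> {1..n-2} \<Longrightarrow> m \<notin> S \<Longrightarrow> skip i j m \<notin> S"
  using le_skip[of m i j] by (simp add: mem_S_iff)

lemma S_subset_skipped: "m \<in> S \<Longrightarrow> m \<in> {1..n-2}"
  unfolding mem_S_iff using n_ge by auto

lemma last_notin_S: "n-1 \<notin> S"
  unfolding mem_S_iff using n_ge by auto

lemma last_not_skipped: "n-1 \<notin> {1..n-2}"
  using n_ge by auto

lemma alpha_pm_last: "alpha_pm n \<alpha> i j sg (n-1) = \<alpha> i + sg * \<alpha> j"
  unfolding alpha_pm_def using last_not_skipped by (simp only: if_False if_True simp_thms)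

lemma alpha_pm_skip: "m \<in> {1..n-2} \<Longrightarrow> alpha_pm n \<alpha> i j sg m = \<alpha> (skip i j m)"
  by (simp add: alpha_pm_def)

definition merged :: "hpt \<Rightarrow> hpt \<Rightarrow> bool" where
  "merged x y \<longleftrightarrow> (\<forall>m\<in>{1..n-2}. fst y m = fst x (skip i j m) \<and> snd y m = snd x (skip i j m))
     \<and> fst x i = 0 \<and> fst x j = 0 \<and> fst y (n-1) = 0
     \<and> vmoment (snd x i) + vmoment (snd x j) = vmoment (snd y (n-1))"

lemma merged_sums:
  assumes "merged x y"
  shows "(\<Sum>k=1..n. Hk x k) = (\<Sum>m=1..n-1. Hk y m)"
    and "(\<Sum>k=1..n. tracefree (outer (snd x k) (fst x k)))
       = (\<Sum>m=1..n-1. tracefree (outer (snd y m) (fst y m)))"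
proof -
  note M = assms[unfolded merged_def]
  have "(\<Sum>m=1..n-2. Hk x (skip i j m)) = (\<Sum>m=1..n-2. Hk y m)"
    using M by (intro sum.cong) (auto simp: Hk_def)
  then show "(\<Sum>k=1..n. Hk x k) = (\<Sum>m=1..n-1. Hk y m)"
    unfolding sum_split_skip[OF i_ne_j ij(1,2)] sum_atLeastAtMost_pred[OF n_ge(2)]
    using M by (simp add: Hk_eq_vmoment add.assoc)
  have "(\<Sum>m=1..n-2. tracefree (outer (snd x (skip i j m)) (fst x (skip i j m))))
      = (\<Sum>m=1..n-2. tracefree (outer (snd y m) (fst y m)))"
    using M by (intro sum.cong) auto
  moreover have "tracefree (outer q 0) = 0" for q by (simp add: mat2_simps)
  ultimately show "(\<Sum>k=1..n. tracefree (outer (snd x k) (fst x k)))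
      = (\<Sum>m=1..n-1. tracefree (outer (snd y m) (fst y m)))"
    unfolding sum_split_skip[OF i_ne_j ij(1,2)] sum_atLeastAtMost_pred[OF n_ge(2)]
    using M by simp
qed

lemma level_iff_merged:
  assumes mrg: "merged x y" and supp: "supp_ok n x" "supp_ok (n-1) y"
    and norm_i: "(norm (snd x i))^2 = 2 * \<alpha> i" and norm_j: "(norm (snd x j))^2 = 2 * \<alpha> j"
    and norm_last: "(norm (snd y (n-1)))^2 = 2 * (\<alpha> i + sg * \<alpha> j)"
  shows "x \<in> level n \<alpha> \<longleftrightarrow> y \<in> level (n-1) (alpha_pm n \<alpha> i j sg)"
proof -
  note M = mrg[unfolded merged_def]
  have split_x: "(\<forall>k\<in>{1..n}. P k) \<longleftrightarrow> P i \<and> P j \<and> (\<forall>m\<in>{1..n-2}. P (skip i j m))" for P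
    by (subst atLeastAtMost_split_skip[OF i_ne_j ij(1,2)]) simp
  have split_y: "(\<forall>k\<in>{1..n-1}. P k) \<longleftrightarrow> P (n-1) \<and> (\<forall>m\<in>{1..n-2}. P m)" for P
    unfolding atLeastAtMost_pred_eq[OF n_ge(2)] by simp
  have "(\<forall>k\<in>{1..n}. (norm (snd x k)^2 - norm (fst x k)^2) / 2 = \<alpha> k) \<longleftrightarrow>
      (\<forall>k\<in>{1..n-1}. (norm (snd y k)^2 - norm (fst y k)^2) / 2 = alpha_pm n \<alpha> i j sg k)"
    unfolding split_x split_y using M norm_i norm_j norm_last alpha_pm_last
    by (simp add: alpha_pm_skip)
  moreover have "(\<forall>k\<in>{1..n}. rowcol (fst x k) (snd x k) = 0) \<longleftrightarrow>
      (\<forall>k\<in>{1..n-1}. rowcol (fst y k) (snd y k) = 0)"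
    unfolding split_x split_y using M by (simp add: rowcol_def)
  ultimately show ?thesis
    unfolding level_iff merged_sums[OF mrg] using supp by simp
qed

lemma Ucond_fst_ij: "Ucond n S x \<Longrightarrow> fst x i = 0 \<and> fst x j = 0"
  using ij unfolding Ucond_def by auto

lemma Ucond_fst_last: "Ucond (n-1) S y \<Longrightarrow> fst y (n-1) = 0"
proof -
  have "n-1 \<in> {1..n-1} - S" using n_ge last_notin_S by auto
  then show "Ucond (n-1) S y \<Longrightarrow> fst y (n-1) = 0" unfolding Ucond_def by blast
qed

lemma Dcond_vmoment_ratio:
  assumes x: "x \<in> level n \<alpha>" and U: "Ucond n S x" and D: "Dcond i j sg x"
  shows "vmoment (snd x j) = mscale (of_real (sg * \<alpha> j / \<alpha> i)) (vmoment (snd x i))"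
proof -
  have x0: "fst x i = 0" "fst x j = 0" using Ucond_fst_ij[OF U] by auto
  have ni: "(norm (snd x i))^2 = 2 * \<alpha> i" and nj: "(norm (snd x j))^2 = 2 * \<alpha> j"
    using level_norm_snd[OF x] ij x0 by auto
  then have qi: "snd x i \<noteq> 0" using alpha_ij_pos by auto
  have par: "rparallel (vmoment (snd x i)) (vmoment (snd x j))"
    and sign: "sg * minner (vmoment (snd x i)) (vmoment (snd x j)) > 0"
    using D x0 unfolding Dcond_def by (simp_all add: Hk_eq_vmoment)
  obtain t where t: "vmoment (snd x j) = mscale (of_real t) (vmoment (snd x i))"
    using rparallel_vmoment_ratio[OF par qi] by blast
  have "2 * \<alpha> j = \<bar>t\<bar> * (2 * \<alpha> i)" using vmoment_ratio_norm[OF t] ni nj by simp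
  then have abs_t: "\<bar>t\<bar> = \<alpha> j / \<alpha> i" using alpha_ij_pos by (simp add: field_simps)
  have "(sg * t) * ((norm (snd x i))^4 / 2) > 0"
    using sign unfolding t minner_mscale_right minner_vmoment_self by (simp add: mult.assoc)
  then have "sg * t > 0" using qi by (simp add: zero_less_mult_iff)
  then have "t = sg * \<alpha> j / \<alpha> i" using sg abs_t by auto
  then show ?thesis using t by simp
qed

lemma smap_fst: "fst (smap n \<alpha> i j sg S x) m = (if m \<in> S then fst x m else 0)"
  by (simp add: smap_def mem_S_iff)

lemma smap_snd_skip: "m \<in> {1..n-2} \<Longrightarrow> snd (smap n \<alpha> i j sg S x) m = snd x (skip i j m)"
  by (simp add: smap_def)

lemma smap_snd_last:
  "snd (smap n \<alpha> i j sg S x) (n-1) = of_real (sqrt ((\<alpha> i + sg * \<alpha> j) / \<alpha> i)) *s snd x i"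
  unfolding smap_def snd_conv using last_not_skipped by (simp only: if_False if_True simp_thms)

lemma smap_snd_other:
  assumes "m \<notin> {1..n-2}" "m \<noteq> n-1"
  shows "snd (smap n \<alpha> i j sg S x) m = 0"
  unfolding smap_def snd_conv if_not_P[OF assms(1)] if_not_P[OF assms(2)] ..

lemma supp_ok_smap: "supp_ok (n-1) (smap n \<alpha> i j sg S x)"
  unfolding supp_ok_def smap_def using n_ge by auto

lemma smap_Ucond: "Ucond n S x \<Longrightarrow> Ucond (n-1) S (smap n \<alpha> i j sg S x)"
  using skip_S S_subset_skipped unfolding Ucond_def smap_fst by (simp add: smap_snd_skip)

lemma smap_merged:
  assumes x: "x \<in> level n \<alpha>" and U: "Ucond n S x" and D: "Dcond i j sg x"
  shows "merged x (smap n \<alpha> i j sg S x)"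
proof -
  let ?r = "sqrt ((\<alpha> i + sg * \<alpha> j) / \<alpha> i)"
  have x0: "fst x i = 0" "fst x j = 0" using Ucond_fst_ij[OF U] by auto
  have fst_skip: "fst (smap n \<alpha> i j sg S x) m = fst x (skip i j m)" if "m \<in> {1..n-2}" for m
  proof (cases "m \<in> S")
    case True
    then show ?thesis by (simp add: smap_fst skip_S)
  next
    case False
    then have "skip i j m \<notin> S" using skip_notin_S that by blast
    then show ?thesis
      using U skip_in_legs[OF that] False unfolding Ucond_def smap_fst by simp
  qed
  have "?r^2 = 1 + sg * \<alpha> j / \<alpha> i"
    using merged_weight_pos alpha_ij_pos by (simp add: field_simps)
  then have "vmoment (snd x i) + vmoment (snd x j) = vmoment (of_real ?r *s snd x i)"
    unfolding vmoment_scale Dcond_vmoment_ratio[OF x U D] by (simp add: mat2_simps algebra_simps)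
  moreover have "fst (smap n \<alpha> i j sg S x) (n-1) = 0"
    using last_notin_S by (simp add: smap_fst)
  ultimately show ?thesis
    unfolding merged_def smap_snd_last using x0 fst_skip smap_snd_skip by simp
qed

lemma smap_level:
  assumes x: "x \<in> level n \<alpha>" and U: "Ucond n S x" and D: "Dcond i j sg x"
  shows "smap n \<alpha> i j sg S x \<in> level (n-1) (alpha_pm n \<alpha> i j sg)"
proof -
  have x0: "fst x i = 0" "fst x j = 0" using Ucond_fst_ij[OF U] by auto
  have ni: "(norm (snd x i))^2 = 2 * \<alpha> i" and nj: "(norm (snd x j))^2 = 2 * \<alpha> j"
    using level_norm_snd[OF x] ij x0 by auto
  have "(norm (snd (smap n \<alpha> i j sg S x) (n-1)))^2 = (\<alpha> i + sg * \<alpha> j) / \<alpha> i * (2 * \<alpha> i)"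
    unfolding smap_snd_last of_real_smult_eq_scaleR using merged_weight_pos alpha_ij_pos ni
    by (simp add: power_mult_distrib)
  also have "\<dots> = 2 * (\<alpha> i + sg * \<alpha> j)" using alpha_ij_pos by simp
  finally show ?thesis
    using level_iff_merged[OF smap_merged[OF assms] _ supp_ok_smap ni nj] x
    unfolding level_iff by blast
qed

definition merged_phase :: "(nat \<Rightarrow> complex) \<Rightarrow> nat \<Rightarrow> complex" where
  "merged_phase e m = (if m \<in> {1..n-2} then e (skip i j m) else e i)"

lemma smap_kact: "smap n \<alpha> i j sg S (kact x A e) = kact (smap n \<alpha> i j sg S x) A (merged_phase e)"
proof -
  have "fst (smap n \<alpha> i j sg S (kact x A e)) m = fst (kact (smap n \<alpha> i j sg S x) A (merged_phase e)) m"
    for m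
    using skip_S S_subset_skipped by (simp add: smap_fst kact_def merged_phase_def)
  moreover have "snd (smap n \<alpha> i j sg S (kact x A e)) m
      = snd (kact (smap n \<alpha> i j sg S x) A (merged_phase e)) m" for m
  proof -
    consider "m \<in> {1..n-2}" | "m = n-1" | "m \<notin> {1..n-2}" "m \<noteq> n-1" by blast
    then show ?thesis
    proof cases
      case 1
      then show ?thesis by (simp add: smap_snd_skip kact_def merged_phase_def)
    next
      case 2
      have "snd (smap n \<alpha> i j sg S (kact x A e)) (n-1)
          = e i *s (matrix_inv A *v snd (smap n \<alpha> i j sg S x) (n-1))"
        unfolding smap_snd_last kact_def snd_conv
        by (simp add: vector_scalar_commute vector_smult_assoc mult.commute)
      also have "\<dots> = snd (kact (smap n \<alpha> i j sg S x) A (merged_phase e)) (n-1)"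
        unfolding kact_def merged_phase_def snd_conv if_not_P[OF last_not_skipped] ..
      finally show ?thesis unfolding 2 .
    next
      case 3
      then show ?thesis by (simp add: smap_snd_other[OF 3] kact_def)
    qed
  qed
  ultimately show ?thesis by (simp add: prod_eq_iff fun_eq_iff)
qed

lemma unimodular_merged_phase: "\<forall>k. cmod (e k) = 1 \<Longrightarrow> \<forall>k. cmod (merged_phase e k) = 1"
  by (simp add: merged_phase_def)

definition split_leg :: "hpt \<Rightarrow> hpt" where
  "split_leg y =
     ((\<lambda>k. if k \<in> {1..card S} then fst y k else 0),
      (\<lambda>k. if k = i then of_real (sqrt (\<alpha> i / (\<alpha> i + sg * \<alpha> j))) *s snd y (n-1)
           else if k = j then of_real (sqrt (\<alpha> j / (\<alpha> i + sg * \<alpha> j))) *s sign_flip sg (snd y (n-1))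
           else if k \<in> {1..n} then snd y (unskip i j k) else 0))"

lemma split_leg_snd_i: "snd (split_leg y) i = of_real (sqrt (\<alpha> i / (\<alpha> i + sg * \<alpha> j))) *s snd y (n-1)"
  by (simp add: split_leg_def)

lemma split_leg_snd_j:
  "snd (split_leg y) j = of_real (sqrt (\<alpha> j / (\<alpha> i + sg * \<alpha> j))) *s sign_flip sg (snd y (n-1))"
  using i_ne_j by (simp add: split_leg_def)

lemma split_leg_snd_skip: "m \<in> {1..n-2} \<Longrightarrow> snd (split_leg y) (skip i j m) = snd y m"
  using skip_in_legs unskip_skip[OF i_ne_j] ij by (simp add: split_leg_def)

lemma split_leg_fst: "fst (split_leg y) k = (if k \<in> S then fst y k else 0)"
  by (simp add: split_leg_def mem_S_iff)

lemma split_weights_sq: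
  "sqrt (\<alpha> i / (\<alpha> i + sg * \<alpha> j))^2 = \<alpha> i / (\<alpha> i + sg * \<alpha> j)"
  "sqrt (\<alpha> j / (\<alpha> i + sg * \<alpha> j))^2 = \<alpha> j / (\<alpha> i + sg * \<alpha> j)"
  using merged_weight_pos alpha_ij_pos by simp_all

lemma split_leg_merged:
  assumes U: "Ucond (n-1) S y"
  shows "merged (split_leg y) y"
proof -
  let ?a = "\<alpha> i + sg * \<alpha> j"
  have "fst y m = fst (split_leg y) (skip i j m)" if "m \<in> {1..n-2}" for m
  proof (cases "m \<in> S")
    case True
    then show ?thesis by (simp add: split_leg_fst skip_S)
  next
    case False
    then have "skip i j m \<notin> S" using skip_notin_S that by blast
    moreover have "fst y m = 0" using U False that unfolding Ucond_def by auto
    ultimately show ?thesis by (simp add: split_leg_fst)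
  qed
  moreover have "vmoment (snd (split_leg y) i) + vmoment (snd (split_leg y) j) = vmoment (snd y (n-1))"
  proof -
    have "sqrt (\<alpha> i / ?a)^2 + sg * sqrt (\<alpha> j / ?a)^2 = ?a / ?a"
      unfolding split_weights_sq by (simp only: add_divide_distrib times_divide_eq_right)
    also have "\<dots> = 1" using merged_weight_pos by simp
    finally have weights: "sqrt (\<alpha> i / ?a)^2 + sg * sqrt (\<alpha> j / ?a)^2 = 1" .
    have "vmoment (snd (split_leg y) i) + vmoment (snd (split_leg y) j)
        = mscale (of_real (sqrt (\<alpha> i / ?a)^2 + sg * sqrt (\<alpha> j / ?a)^2)) (vmoment (snd y (n-1)))"
      unfolding split_leg_snd_i split_leg_snd_j vmoment_scale vmoment_sign_flip[OF sg]
      by (simp add: mat2_simps algebra_simps)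
    then show ?thesis unfolding weights by simp
  qed
  ultimately show ?thesis
    unfolding merged_def using Ucond_fst_last[OF U] card_S_less split_leg_snd_skip
    by (simp add: split_leg_fst mem_S_iff)
qed

lemma supp_ok_split_leg: "supp_ok n (split_leg y)"
  unfolding supp_ok_def split_leg_def using ij n_ge by auto

lemma split_leg_level:
  assumes y: "y \<in> level (n-1) (alpha_pm n \<alpha> i j sg)" and U: "Ucond (n-1) S y"
  shows "split_leg y \<in> level n \<alpha>"
proof -
  let ?a = "\<alpha> i + sg * \<alpha> j"
  have "(norm (snd y (n-1)))^2 = 2 * ?a"
    using level_norm_snd[OF y _ Ucond_fst_last[OF U]] n_ge alpha_pm_last by simp
  moreover have "norm (snd (split_leg y) i) = \<bar>sqrt (\<alpha> i / ?a)\<bar> * norm (snd y (n-1))"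
    "norm (snd (split_leg y) j) = \<bar>sqrt (\<alpha> j / ?a)\<bar> * norm (snd y (n-1))"
    unfolding split_leg_snd_i split_leg_snd_j of_real_smult_eq_scaleR by simp_all
  ultimately have "(norm (snd (split_leg y) i))^2 = \<alpha> i / ?a * (2 * ?a)"
    "(norm (snd (split_leg y) j))^2 = \<alpha> j / ?a * (2 * ?a)"
    by (simp_all add: power_mult_distrib split_weights_sq)
  moreover have "?a \<noteq> 0" using merged_weight_pos by simp
  then have "\<alpha> i / ?a * (2 * ?a) = 2 * \<alpha> i" "\<alpha> j / ?a * (2 * ?a) = 2 * \<alpha> j"
    by (simp_all add: field_simps)
  ultimately have "(norm (snd (split_leg y) i))^2 = 2 * \<alpha> i"
    "(norm (snd (split_leg y) j))^2 = 2 * \<alpha> j"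
    by simp_all
  with \<open>(norm (snd y (n-1)))^2 = 2 * ?a\<close> show ?thesis
    using level_iff_merged[OF split_leg_merged[OF U] supp_ok_split_leg] y
    unfolding level_iff by blast
qed

lemma split_leg_Ucond: "Ucond (n-1) S y \<Longrightarrow> Ucond n S (split_leg y)"
proof -
  have "snd (split_leg y) k = snd y k" if "k \<in> S" for k
    using split_leg_snd_skip[OF S_subset_skipped[OF that]] skip_S[OF that] by simp
  then show "Ucond (n-1) S y \<Longrightarrow> Ucond n S (split_leg y)"
    unfolding Ucond_def by (simp add: split_leg_fst)
qed

lemma split_leg_Dcond:
  assumes y: "y \<in> level (n-1) (alpha_pm n \<alpha> i j sg)" and U: "Ucond (n-1) S y"
  shows "Dcond i j sg (split_leg y)"
proof -
  let ?a = "\<alpha> i + sg * \<alpha> j"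
  let ?r1 = "sqrt (\<alpha> i / ?a)^2" and ?r2 = "sqrt (\<alpha> j / ?a)^2"
  let ?v = "snd y (n-1)"
  have x0: "fst (split_leg y) i = 0" "fst (split_leg y) j = 0"
    using ij by (simp_all add: split_leg_fst)
  have Hi: "Hk (split_leg y) i = mscale (of_real ?r1) (vmoment ?v)"
    and Hj: "Hk (split_leg y) j = mscale (of_real (sg * ?r2)) (vmoment ?v)"
    using x0 by (simp_all add: Hk_eq_vmoment split_leg_snd_i split_leg_snd_j vmoment_scale
        vmoment_sign_flip[OF sg] mscale_mscale mult.commute)
  have r: "?r1 > 0" "?r2 > 0" using merged_weight_pos alpha_ij_pos by simp_all
  have "(norm ?v)^2 = 2 * ?a"
    using level_norm_snd[OF y _ Ucond_fst_last[OF U]] n_ge alpha_pm_last by simp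
  then have v: "?v \<noteq> 0" using merged_weight_pos by auto
  have "mscale (of_real (sg * ?r2)) (Hk (split_leg y) i) + mscale (of_real (- ?r1)) (Hk (split_leg y) j) = 0"
    unfolding Hi Hj by (simp add: mat2_simps)
  then have "rparallel (Hk (split_leg y) i) (Hk (split_leg y) j)"
    unfolding rparallel_def using r by (intro exI[of _ "sg * ?r2"] exI[of _ "- ?r1"]) simp
  moreover have "sg * minner (Hk (split_leg y) i) (Hk (split_leg y) j) = ?r1 * ?r2 * ((norm ?v)^4 / 2)"
    unfolding Hi Hj minner_mscale_left minner_mscale_right minner_vmoment_self using sg by auto
  moreover have "?r1 * ?r2 * ((norm ?v)^4 / 2) > 0" using r v by simp
  ultimately show ?thesis unfolding Dcond_def by simp
qed

lemma smap_split_leg: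
  assumes U: "Ucond (n-1) S y" and supp: "supp_ok (n-1) y"
  shows "smap n \<alpha> i j sg S (split_leg y) = y"
proof -
  have "fst y m = 0" if "m \<notin> S" for m
    using U supp that unfolding Ucond_def supp_ok_def by (cases "m \<in> {1..n-1}") auto
  then have "fst (smap n \<alpha> i j sg S (split_leg y)) m = fst y m" for m
    by (simp add: smap_fst split_leg_fst)
  moreover have "snd (smap n \<alpha> i j sg S (split_leg y)) m = snd y m" for m
  proof -
    consider "m \<in> {1..n-2}" | "m = n-1" | "m \<notin> {1..n-1}" by fastforce
    then show ?thesis
    proof cases
      case 3
      then show ?thesis using supp n_ge unfolding supp_ok_def smap_def by auto
    next
      case 2
      have "sqrt ((\<alpha> i + sg * \<alpha> j) / \<alpha> i) * sqrt (\<alpha> i / (\<alpha> i + sg * \<alpha> j)) = 1"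
        using merged_weight_pos alpha_ij_pos by (simp add: real_sqrt_mult[symmetric])
      then show ?thesis
        unfolding 2 smap_snd_last split_leg_snd_i vector_smult_assoc of_real_mult[symmetric] by simp
    qed (simp add: smap_snd_skip split_leg_snd_skip)
  qed
  ultimately show ?thesis by (simp add: prod_eq_iff fun_eq_iff)
qed

lemma smap_eq_kact_legs:
  assumes x1: "x1 \<in> level n \<alpha>" "Ucond n S x1" "Dcond i j sg x1"
    and x2: "x2 \<in> level n \<alpha>" "Ucond n S x2" "Dcond i j sg x2"
    and A: "A \<in> SU2" "\<forall>k. cmod (e k) = 1"
    and eq: "smap n \<alpha> i j sg S x2 = kact (smap n \<alpha> i j sg S x1) A e"
  shows "snd x2 i = e (n-1) *s (ctransp A *v snd x1 i)"
    and "\<exists>c. cmod c = 1 \<and> snd x2 j = c *s (ctransp A *v snd x1 j)"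
proof -
  let ?r = "of_real (sqrt ((\<alpha> i + sg * \<alpha> j) / \<alpha> i)) :: complex"
  have "?r *s snd x2 i = ?r *s (e (n-1) *s (ctransp A *v snd x1 i))"
    using arg_cong[OF eq, of "\<lambda>z. snd z (n-1)"]
    unfolding smap_snd_last kact_def SU2_matrix_inv[OF A(1)] snd_conv
    by (simp add: vector_scalar_commute vector_smult_assoc mult.commute)
  moreover have "?r \<noteq> 0" using merged_weight_pos alpha_ij_pos by simp
  ultimately show qi: "snd x2 i = e (n-1) *s (ctransp A *v snd x1 i)"
    by (metis vector_mul_lcancel)
  have "vmoment (snd x2 j) = mscale (of_real (sg * \<alpha> j / \<alpha> i)) (ctransp A ** vmoment (snd x1 i) ** A)"
    unfolding Dcond_vmoment_ratio[OF x2] qi vmoment_SU2_conj[OF A(1) A(2)[rule_format]] ..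
  also have "\<dots> = ctransp A ** vmoment (snd x1 j) ** A"
    unfolding Dcond_vmoment_ratio[OF x1] mult_mscale_mult ..
  also have "\<dots> = vmoment (1 *s (ctransp A *v snd x1 j))"
    using vmoment_SU2_conj[OF A(1), of 1] by simp
  finally obtain c where "cmod c = 1" "snd x2 j = c *s (1 *s (ctransp A *v snd x1 j))"
    by (rule vmoment_eq_imp_phase)
  then show "\<exists>c. cmod c = 1 \<and> snd x2 j = c *s (ctransp A *v snd x1 j)" by auto
qed

lemma unskip_S: "k \<in> S \<Longrightarrow> unskip i j k = k"
  using card_S_less by (intro unskip_less_min) (simp add: mem_S_iff)

lemma S_subset_legs:
  assumes "k \<in> S"
  shows "k \<in> {1..n} \<and> k \<noteq> i \<and> k \<noteq> j"
  using ij S_subset_skipped[OF assms] assms by auto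

definition split_phase :: "(nat \<Rightarrow> complex) \<Rightarrow> complex \<Rightarrow> nat \<Rightarrow> complex" where
  "split_phase e c k = (if k = i then e (n-1) else if k = j then c
                        else if k \<in> {1..n} then e (unskip i j k) else 1)"

lemma split_phase_S: "k \<in> S \<Longrightarrow> split_phase e c k = e k"
  using S_subset_legs by (simp add: split_phase_def unskip_S)

lemma split_phase_skip: "m \<in> {1..n-2} \<Longrightarrow> split_phase e c (skip i j m) = e m"
  using skip_in_legs unskip_skip[OF i_ne_j] ij by (simp add: split_phase_def)

lemma smap_eq_kact_imp_kact:
  assumes x1: "x1 \<in> level n \<alpha>" "Ucond n S x1" "Dcond i j sg x1"
    and x2: "x2 \<in> level n \<alpha>" "Ucond n S x2" "Dcond i j sg x2"
    and A: "A \<in> SU2" "\<forall>k. cmod (e k) = 1"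
    and eq: "smap n \<alpha> i j sg S x2 = kact (smap n \<alpha> i j sg S x1) A e"
  obtains c where "cmod c = 1" "x2 = kact x1 A (split_phase e c)"
proof -
  note legs = smap_eq_kact_legs[OF x1 x2 A eq]
  obtain c where c: "cmod c = 1" "snd x2 j = c *s (ctransp A *v snd x1 j)"
    using legs(2) by blast
  have supp: "supp_ok n x1" "supp_ok n x2" using x1(1) x2(1) unfolding level_iff by blast+
  have "fst x2 k = inverse (split_phase e c k) *s (fst x1 k v* A)" for k
  proof (cases "k \<in> S")
    case True
    then show ?thesis
      using arg_cong[OF eq, of "\<lambda>z. fst z k"] by (simp add: smap_fst kact_def split_phase_S)
  next
    case False
    then have "fst x1 k = 0 \<and> fst x2 k = 0"
      using x1(2) x2(2) supp unfolding Ucond_def supp_ok_def by (cases "k \<in> {1..n}") auto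
    then show ?thesis by simp
  qed
  moreover have "snd x2 k = split_phase e c k *s (ctransp A *v snd x1 k)" for k
  proof -
    consider "k = i" | "k = j" | m where "m \<in> {1..n-2}" "k = skip i j m" | "k \<notin> {1..n}"
      using atLeastAtMost_split_skip[OF i_ne_j ij(1,2)] by blast
    then show ?thesis
    proof cases
      case (3 m)
      then show ?thesis
        using arg_cong[OF eq, of "\<lambda>z. snd z m"]
        by (simp add: smap_snd_skip kact_def SU2_matrix_inv[OF A(1)] split_phase_skip)
    next
      case 4
      then show ?thesis using supp unfolding supp_ok_def by simp
    qed (use legs(1) c i_ne_j in \<open>simp_all add: split_phase_def\<close>)
  qed
  ultimately have "x2 = kact x1 A (split_phase e c)"
    unfolding kact_def SU2_matrix_inv[OF A(1)] by (simp add: prod_eq_iff fun_eq_iff)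
  with c(1) show ?thesis by (rule that)
qed

lemma unimodular_split_phase:
  "\<forall>k. cmod (e k) = 1 \<Longrightarrow> cmod c = 1 \<Longrightarrow> \<forall>k. cmod (split_phase e c k) = 1"
  by (simp add: split_phase_def)

definition smap_class :: "hpt set \<Rightarrow> hpt set" where
  "smap_class c = hclass (n-1) (alpha_pm n \<alpha> i j sg) (smap n \<alpha> i j sg S (SOME x. x \<in> c))"

lemma mem_domainD:
  assumes "c \<in> Dsg n \<alpha> i j sg \<inter> U n \<alpha> S" "x \<in> c"
  shows "x \<in> level n \<alpha>" "Ucond n S x" "Dcond i j sg x" "c = hclass n \<alpha> x"
  using assms Xsp_elem[of c n \<alpha> x] unfolding Dsg_def U_eq by blast+

lemma mem_codomainD:
  assumes "c \<in> U (n-1) (alpha_pm n \<alpha> i j sg) S" "y \<in> c"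
  shows "y \<in> level (n-1) (alpha_pm n \<alpha> i j sg)" "Ucond (n-1) S y"
    "c = hclass (n-1) (alpha_pm n \<alpha> i j sg) y"
  using assms Xsp_elem[of c "n-1" _ y] unfolding U_eq by blast+

lemma smap_class_eq:
  assumes c: "c \<in> Dsg n \<alpha> i j sg \<inter> U n \<alpha> S" and x: "x \<in> c"
  shows "smap_class c = hclass (n-1) (alpha_pm n \<alpha> i j sg) (smap n \<alpha> i j sg S x)"
proof -
  let ?z = "SOME x. x \<in> c"
  have z: "?z \<in> c" using x by (rule someI)
  then have "x \<in> hclass n \<alpha> ?z" using x mem_domainD(4)[OF c z] by simp
  then obtain A e where A: "A \<in> SU2" "\<forall>k. cmod (e k) = 1" "x = kact ?z A e"
    using mem_hclassD by blast
  have "smap n \<alpha> i j sg S x = kact (smap n \<alpha> i j sg S ?z) A (merged_phase e)"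
    using A(3) smap_kact by simp
  then show ?thesis
    unfolding smap_class_def using mem_domainD[OF c z] mem_domainD[OF c x]
    by (intro hclass_eqI[OF smap_level smap_level A(1) unimodular_merged_phase[OF A(2)]])
qed

lemma smap_class_in_U:
  assumes c: "c \<in> Dsg n \<alpha> i j sg \<inter> U n \<alpha> S"
  shows "smap_class c \<in> U (n-1) (alpha_pm n \<alpha> i j sg) S"
proof -
  obtain x where x: "x \<in> c" using Xsp_elem_nonempty c unfolding Dsg_def by blast
  show ?thesis
    unfolding smap_class_eq[OF c x] using mem_domainD[OF c x]
    by (intro hclass_in_U smap_level smap_Ucond)
qed

lemma inj_on_smap_class: "inj_on smap_class (Dsg n \<alpha> i j sg \<inter> U n \<alpha> S)"
proof (rule inj_onI)
  fix c1 c2 assume c1: "c1 \<in> Dsg n \<alpha> i j sg \<inter> U n \<alpha> S" and c2: "c2 \<in> Dsg n \<alpha> i j sg \<inter> U n \<alpha> S"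
    and eq: "smap_class c1 = smap_class c2"
  obtain x1 x2 where x: "x1 \<in> c1" "x2 \<in> c2"
    using Xsp_elem_nonempty c1 c2 unfolding Dsg_def by blast
  note m1 = mem_domainD[OF c1 x(1)] and m2 = mem_domainD[OF c2 x(2)]
  have "smap n \<alpha> i j sg S x2 \<in> hclass (n-1) (alpha_pm n \<alpha> i j sg) (smap n \<alpha> i j sg S x1)"
    using eq hclass_self[OF smap_level[OF m2(1-3)]] unfolding smap_class_eq[OF c1 x(1)]
      smap_class_eq[OF c2 x(2)] by simp
  then obtain A e' where "A \<in> SU2" "\<forall>k. cmod (e' k) = 1"
    "smap n \<alpha> i j sg S x2 = kact (smap n \<alpha> i j sg S x1) A e'"
    using mem_hclassD by blast
  then obtain c where "cmod c = 1" "x2 = kact x1 A (split_phase e' c)"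
    using smap_eq_kact_imp_kact[OF m1(1-3) m2(1-3)] by blast
  then show "c1 = c2"
    using hclass_eqI[OF m1(1) m2(1) \<open>A \<in> SU2\<close> unimodular_split_phase] m1(4) m2(4)
      \<open>\<forall>k. cmod (e' k) = 1\<close> by simp
qed

lemma smap_class_split_leg:
  assumes c: "c \<in> U (n-1) (alpha_pm n \<alpha> i j sg) S" and y: "y \<in> c"
  shows "hclass n \<alpha> (split_leg y) \<in> Dsg n \<alpha> i j sg \<inter> U n \<alpha> S"
    and "smap_class (hclass n \<alpha> (split_leg y)) = c"
proof -
  note m = mem_codomainD[OF c y]
  have x: "split_leg y \<in> level n \<alpha>" by (rule split_leg_level[OF m(1,2)])
  show cA: "hclass n \<alpha> (split_leg y) \<in> Dsg n \<alpha> i j sg \<inter> U n \<alpha> S"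
    using hclass_in_Dsg[OF x split_leg_Dcond[OF m(1,2)]] hclass_in_U[OF x split_leg_Ucond[OF m(2)]]
    by blast
  have supp: "supp_ok (n-1) y" using m(1) unfolding level_iff by blast
  show "smap_class (hclass n \<alpha> (split_leg y)) = c"
    unfolding smap_class_eq[OF cA hclass_self[OF x]] smap_split_leg[OF m(2) supp] m(3) ..
qed

lemma bij_betw_smap_class:
  "bij_betw smap_class (Dsg n \<alpha> i j sg \<inter> U n \<alpha> S) (U (n-1) (alpha_pm n \<alpha> i j sg) S)"
proof -
  have "c \<in> smap_class ` (Dsg n \<alpha> i j sg \<inter> U n \<alpha> S)" if c: "c \<in> U (n-1) (alpha_pm n \<alpha> i j sg) S" for c
  proof -
    obtain y where "y \<in> c" using Xsp_elem_nonempty c unfolding U_def by blast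
    then show ?thesis using smap_class_split_leg[OF c] by (metis image_eqI)
  qed
  then show ?thesis
    unfolding bij_betw_def using inj_on_smap_class smap_class_in_U by blast
qed

lemma split_leg_continuous: "continuous_on UNIV split_leg"
  unfolding split_leg_def sign_flip_def
  by (intro continuous_on_Pair continuous_on_coordinatewise_then_product continuous_on_if_const
      continuous_on_const continuous_on_fst_at continuous_on_snd_at continuous_on_smult
      continuous_on_quat_j)

lemma split_leg_padd: "split_leg (padd x t v) = padd (split_leg x) t (split_leg v)"
  by (simp add: split_leg_def sign_flip_def padd_def prod_eq_iff fun_eq_iff smult_add_scaleR
      quat_j_add_scaleR smult_scaleR)

lemma smap_continuous: "continuous_on UNIV (smap n \<alpha> i j sg S)"
  unfolding smap_def
  by (intro continuous_on_Pair continuous_on_coordinatewise_then_product continuous_on_if_const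
      continuous_on_const continuous_on_fst_at continuous_on_snd_at continuous_on_smult)

lemma smap_padd: "smap n \<alpha> i j sg S (padd x t v) = padd (smap n \<alpha> i j sg S x) t (smap n \<alpha> i j sg S v)"
  by (simp add: smap_def padd_def prod_eq_iff fun_eq_iff smult_add_scaleR smult_scaleR)

lemma qsmooth_smap_class: "qsmooth (Dsg n \<alpha> i j sg \<inter> U n \<alpha> S) smap_class"
  unfolding qsmooth_def
proof (intro ballI exI conjI)
  show "smooth_hmap_on UNIV (smap n \<alpha> i j sg S)"
    by (rule smooth_hmap_on_linear[OF smap_continuous smap_padd])
  fix c y assume "c \<in> Dsg n \<alpha> i j sg \<inter> U n \<alpha> S" "y \<in> c \<inter> UNIV"
  then show "smap n \<alpha> i j sg S y \<in> smap_class c"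
    using smap_class_eq hclass_self smap_level mem_domainD by simp
qed simp

lemma qsmooth_inv_smap_class:
  "qsmooth (U (n-1) (alpha_pm n \<alpha> i j sg) S) (inv_into (Dsg n \<alpha> i j sg \<inter> U n \<alpha> S) smap_class)"
  unfolding qsmooth_def
proof (intro ballI exI conjI)
  show "smooth_hmap_on UNIV split_leg"
    by (rule smooth_hmap_on_linear[OF split_leg_continuous split_leg_padd])
  fix c y assume c: "c \<in> U (n-1) (alpha_pm n \<alpha> i j sg) S" and "y \<in> c \<inter> UNIV"
  then have y: "y \<in> c" by simp
  have "inv_into (Dsg n \<alpha> i j sg \<inter> U n \<alpha> S) smap_class c = hclass n \<alpha> (split_leg y)"
    using inv_into_f_f[OF inj_on_smap_class smap_class_split_leg(1)[OF c y]]
    unfolding smap_class_split_leg(2)[OF c y] .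
  then show "split_leg y \<in> inv_into (Dsg n \<alpha> i j sg \<inter> U n \<alpha> S) smap_class c"
    using hclass_self split_leg_level mem_codomainD[OF c y] by simp
qed simp

theorem merge_legs_diffeo:
  "qdiffeo (Dsg n \<alpha> i j sg \<inter> U n \<alpha> S) (U (n-1) (alpha_pm n \<alpha> i j sg) S) smap_class
   \<and> (\<forall>c\<in>Dsg n \<alpha> i j sg \<inter> U n \<alpha> S. \<forall>x\<in>c.
        smap_class c = hclass (n-1) (alpha_pm n \<alpha> i j sg) (smap n \<alpha> i j sg S x))"
  unfolding qdiffeo_def
  using bij_betw_smap_class qsmooth_smap_class qsmooth_inv_smap_class by (simp add: smap_class_eq)

end

theorem mainTheorem10:
  fixes n :: nat and \<alpha> :: "nat \<Rightarrow> real" and S :: "nat set" and i j :: nat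
  assumes "\<forall>k\<in>{1..n}. \<alpha> k > 0"
    and "generic n \<alpha>"
    and "S = {1..card S}" and "short n \<alpha> S" and "card S \<ge> 2"
    and "i \<in> {1..n}" and "j \<in> {1..n}" and "i \<notin> S" and "j \<notin> S"
    and "\<alpha> i > \<alpha> j"
  shows "(\<exists>s. qdiffeo (Dplus n \<alpha> i j \<inter> U n \<alpha> S) (U (n - 1) (alpha_pm n \<alpha> i j 1) S) s
            \<and> (\<forall>c\<in>Dplus n \<alpha> i j \<inter> U n \<alpha> S. \<forall>x\<in>c.
                 s c = hclass (n - 1) (alpha_pm n \<alpha> i j 1) (smap n \<alpha> i j 1 S x)))
       \<and> (\<exists>s. qdiffeo (Dminus n \<alpha> i j \<inter> U n \<alpha> S) (U (n - 1) (alpha_pm n \<alpha> i j (-1)) S) s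
            \<and> (\<forall>c\<in>Dminus n \<alpha> i j \<inter> U n \<alpha> S. \<forall>x\<in>c.
                 s c = hclass (n - 1) (alpha_pm n \<alpha> i j (-1)) (smap n \<alpha> i j (-1) S x)))"
proof -
  interpret plus: leg_merging n \<alpha> S i j 1
    using assms by unfold_locales auto
  interpret minus: leg_merging n \<alpha> S i j "-1"
    using assms by unfold_locales auto
  show ?thesis
    unfolding Dplus_eq Dminus_eq
    by (rule conjI; rule exI, rule plus.merge_legs_diffeo minus.merge_legs_diffeo)
qed

end
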